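(* Consider the closed-loop system described in the context, with the controller matrices $a,b,c$ regarded as independent variables, and suppose $\mathcal{A}$ is Hurwitz. Then the Fréchet derivatives of the cost $E$ with respect to $a$, $b$, $c$ are $$\partial_a E=2H_{22},\qquad \partial_b E=2\big(H_{21}\mathbf{C}^{T}+Q_{2\bullet}\mathcal{B}\mathbf{D}^{T}\big),\qquad \partial_c E=2\big(B_2^{T}H_{12}+D_0^{T}\mathcal{C}P_{\bullet 2}\big).$$
   Context: Let $n,m_1,m_2,p,p_0$ be positive integers. Plant matrices: $A\in\mathbb{R}^{n\times n}$, $B_1\in\mathbb{R}^{n\times m_1}$, $B_2\in\mathbb{R}^{n\times m_2}$, $C\in\mathbb{R}^{p\times n}$, $D\in\mathbb{R}^{p\times m_1}$, $C_0\in\mathbb{R}^{p_0\times n}$, $D_0\in\mathbb{R}^{p_0\times m_2}$. Controller matrices: $a\in\mathbb{R}^{n\times n}$, $b_1\in\mathbb{R}^{n\times m_2}$, $b_2\in\mathbb{R}^{n\times p}$, $c\in\mathbb{R}^{m_2\times n}$. Set $b:=[\,b_1\ \ b_2\,]\in\mathbb{R}^{n\times(m_2+p)}$, $B:=[\,B_1\ \ B_2\,]$, $\mathbf{C}:=\begin{bmatrix}0\\ C\end{bmatrix}\in\mathbb{R}^{(m_2+p)\times n}$, $\mathbf{D}:=\begin{bmatrix}0 & I_{m_2}\\ D & 0\end{bmatrix}\in\mathbb{R}^{(m_2+p)\times(m_1+m_2)}$. The closed-loop matrices are $$\mathcal{A}:=\begin{bmatrix}A & B_2c\\ b\mathbf{C}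 & a\end{bmatrix}\in\mathbb{R}^{2n\times 2n},\quad \mathcal{B}:=\begin{bmatrix}B\\ b\mathbf{D}\end{bmatrix},\quad \mathcal{C}:=\begin{bmatrix}C_0 & D_0c\end{bmatrix}.$$ When $\mathcal{A}$ is Hurwitz, $P,Q\in\mathbb{R}^{2n\times 2n}$ are the unique solutions of $\mathcal{A}P+P\mathcal{A}^{T}+\mathcal{B}\mathcal{B}^{T}=0$ and $\mathcal{A}^{T}Q+Q\mathcal{A}+\mathcal{C}^{T}\mathcal{C}=0$, the cost is $E:=\mathrm{Tr}(\mathcal{C}P\mathcal{C}^{T})$, and $H:=QP$. The matrices $H,P,Q$ are partitioned into $n\times n$ blocks indexed $(j,k)$, $j,k\in\{1,2\}$ (e.g. $H_{12},H_{21},H_{22}$); $Q_{2\bullet}\in\mathbb{R}^{n\times 2n}$ is the second block row of $Q$ and $P_{\bullet2}\in\mathbb{R}^{2n\times n}$ the second block column of $P$. Derivatives are with respect to the Frobenius inner product. *)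

theory Defs
  imports "HOL-Analysis.Analysis"
begin

(* Matrices are HOL-Analysis matrices: M :: real^'c^'r is an 'r-by-'c matrix, entry M$i$j.
   Block matrices are indexed by sum types. *)

definition hcat :: "real^('c1::finite)^('r::finite) \<Rightarrow> real^('c2::finite)^('r::finite) \<Rightarrow> real^(('c1::finite)+('c2::finite))^('r::finite)" where
  "hcat X Y = (\<chi> i j. case j of Inl j1 \<Rightarrow> X$i$j1 | Inr j2 \<Rightarrow> Y$i$j2)"

definition vcat :: "real^('c::finite)^('r1::finite) \<Rightarrow> real^('c::finite)^('r2::finite) \<Rightarrow> real^('c::finite)^(('r1::finite)+('r2::finite))" where
  "vcat X Y = (\<chi> i j. case i of Inl i1 \<Rightarrow> X$i1$j | Inr i2 \<Rightarrow> Y$i2$j)"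

definition block ::
  "real^('c1::finite)^('r1::finite) \<Rightarrow> real^('c2::finite)^('r1::finite) \<Rightarrow> real^('c1::finite)^('r2::finite) \<Rightarrow> real^('c2::finite)^('r2::finite) \<Rightarrow> real^(('c1::finite)+('c2::finite))^(('r1::finite)+('r2::finite))" where
  "block M11 M12 M21 M22 = vcat (hcat M11 M12) (hcat M21 M22)"

definition blk11 :: "real^(('n::finite)+('n::finite))^(('n::finite)+('n::finite)) \<Rightarrow> real^('n::finite)^('n::finite)" where
  "blk11 M = (\<chi> i j. M$(Inl i)$(Inl j))"
definition blk12 :: "real^(('n::finite)+('n::finite))^(('n::finite)+('n::finite)) \<Rightarrow> real^('n::finite)^('n::finite)" where
  "blk12 M = (\<chi> i j. M$(Inl i)$(Inr j))"
definition blk21 :: "real^(('n::finite)+('n::finite))^(('n::finite)+('n::finite)) \<Rightarrow> real^('n::finite)^('n::finite)" where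
  "blk21 M = (\<chi> i j. M$(Inr i)$(Inl j))"
definition blk22 :: "real^(('n::finite)+('n::finite))^(('n::finite)+('n::finite)) \<Rightarrow> real^('n::finite)^('n::finite)" where
  "blk22 M = (\<chi> i j. M$(Inr i)$(Inr j))"

definition brow2 :: "real^(('n::finite)+('n::finite))^(('n::finite)+('n::finite)) \<Rightarrow> real^(('n::finite)+('n::finite))^('n::finite)" where
  "brow2 M = (\<chi> i j. M$(Inr i)$j)"
definition bcol2 :: "real^(('n::finite)+('n::finite))^(('n::finite)+('n::finite)) \<Rightarrow> real^('n::finite)^(('n::finite)+('n::finite))" where
  "bcol2 M = (\<chi> i j. M$i$(Inr j))"

definition hurwitz :: "real^('k::finite)^('k::finite) \<Rightarrow> bool" where
  "hurwitz M \<longleftrightarrow>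
     (\<forall>z::complex. det (mat z - (\<chi> i j. complex_of_real (M$i$j))) = 0 \<longrightarrow> Re z < 0)"

(* the (unique, when M is Hurwitz) solution X of  M X + X M^T + W = 0 *)
definition lyap :: "real^('k::finite)^('k::finite) \<Rightarrow> real^('k::finite)^('k::finite) \<Rightarrow> real^('k::finite)^('k::finite)" where
  "lyap M W = (THE X. M ** X + X ** transpose M + W = 0)"

definition bfC :: "real^('n::finite)^('p::finite) \<Rightarrow> real^('n::finite)^(('m2::finite)+('p::finite))" where
  "bfC C = vcat 0 C"
definition bfD :: "real^('m1::finite)^('p::finite) \<Rightarrow> real^(('m1::finite)+('m2::finite))^(('m2::finite)+('p::finite))" where
  "bfD D = block 0 (mat 1) D 0"

(* closed-loop matrices; b = [b1 b2] is a single variable *)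
definition clA :: "real^('n::finite)^('n::finite) \<Rightarrow> real^('m2::finite)^('n::finite) \<Rightarrow> real^('n::finite)^('p::finite)
      \<Rightarrow> real^('n::finite)^('n::finite) \<Rightarrow> real^(('m2::finite)+('p::finite))^('n::finite) \<Rightarrow> real^('n::finite)^('m2::finite) \<Rightarrow> real^(('n::finite)+('n::finite))^(('n::finite)+('n::finite))" where
  "clA A B2 C a b c = block A (B2 ** c) (b ** bfC C) a"

definition clB :: "real^('m1::finite)^('n::finite) \<Rightarrow> real^('m2::finite)^('n::finite) \<Rightarrow> real^('m1::finite)^('p::finite)
      \<Rightarrow> real^(('m2::finite)+('p::finite))^('n::finite) \<Rightarrow> real^(('m1::finite)+('m2::finite))^(('n::finite)+('n::finite))" where
  "clB B1 B2 D b = vcat (hcat B1 B2) (b ** bfD D)"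

definition clC :: "real^('n::finite)^('p0::finite) \<Rightarrow> real^('m2::finite)^('p0::finite) \<Rightarrow> real^('n::finite)^('m2::finite) \<Rightarrow> real^(('n::finite)+('n::finite))^('p0::finite)" where
  "clC C0 D0 c = hcat C0 (D0 ** c)"

definition gramP where
  "gramP A B1 B2 C D a b c =
     lyap (clA A B2 C a b c) (clB B1 B2 D b ** transpose (clB B1 B2 D b))"

definition gramQ where
  "gramQ A B2 C C0 D0 a b c =
     lyap (transpose (clA A B2 C a b c)) (transpose (clC C0 D0 c) ** clC C0 D0 c)"

definition cost where
  "cost A B1 B2 C D C0 D0 a b c =
     trace (clC C0 D0 c ** gramP A B1 B2 C D a b c ** transpose (clC C0 D0 c))"

definition Hmat where
  "Hmat A B1 B2 C D C0 D0 a b c = gramQ A B2 C C0 D0 a b c ** gramP A B1 B2 C D a b c"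

end

theory Submission
  imports Defs "Jordan_Normal_Form.Schur_Decomposition"
begin

text \<open>
  If the closed-loop matrix A is Hurwitz, the Lyapunov operator X |-> A X + X A^T is injective:
  after a Schur triangularisation of A the equation A X + X A^T = 0 can be solved entry by entry
  from the bottom-right corner, each entry being multiplied by a sum of two eigenvalues of A, which
  has negative real part. Hence P and Q are well defined and symmetric, and P depends continuously
  on the data. With V = C^T C and W = B B^T for the closed-loop B and C, the cost is tr(V P).
  Because Q solves the adjoint equation, near a base point (A0, V0) the cost equals
  tr((V - V0) P) + tr(Q W) + tr(Q ((A - A0) P + P (A - A0)^T)), in which P is only multiplied by
  quantities vanishing at the base point. Continuity of P therefore suffices to differentiate, and
  the differential is 2 <Q P, dA> + 2 <Q B, dB> + 2 <C P, dC>. The three partial derivatives are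
  read off from the block structure of A, B and C.
\<close>

no_notation Matrix.vec_index (infixl "$" 100)
no_notation Matrix.scalar_prod (infix "\<bullet>" 70)

lemma bounded_bilinear_matrix_mult:
  "bounded_bilinear ((**) :: real^'m^'n \<Rightarrow> real^'p^'m \<Rightarrow> real^'p^'n)"
proof -
  have "bilinear ((**) :: real^'m^'n \<Rightarrow> real^'p^'m \<Rightarrow> real^'p^'n)"
    unfolding bilinear_def
    by (auto intro!: linearI simp: Finite_Cartesian_Product.vec_eq_iff matrix_matrix_mult_def
        sum.distrib sum_distrib_left algebra_simps)
  then show ?thesis
    by (simp add: bilinear_conv_bounded_bilinear)
qed

lemmas has_derivative_matrix_mult [derivative_intros] =
  bounded_bilinear.FDERIV[OF bounded_bilinear_matrix_mult]

lemma matrix_add_rdistrib: "(A + B) ** C = A ** C + B ** C"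
  for A B :: "'a::semiring_1^'m^'n"
  by (simp add: Finite_Cartesian_Product.vec_eq_iff matrix_matrix_mult_def sum.distrib distrib_right)

lemma matrix_transpose_add: "transpose (A + B) = transpose A + transpose B"
  for A B :: "'a::semiring_1^'m^'n"
  by (simp add: Finite_Cartesian_Product.vec_eq_iff transpose_def)

lemma matrix_transpose_zero [simp]: "transpose 0 = (0 :: 'a::zero^'m^'n)"
  by (simp add: Finite_Cartesian_Product.vec_eq_iff transpose_def)

lemma bounded_linear_transpose: "bounded_linear (transpose :: real^'m^'n \<Rightarrow> real^'n^'m)"
  by (auto intro!: linear_conv_bounded_linear[THEN iffD1] linearI
      simp: transpose_scalar Finite_Cartesian_Product.vec_eq_iff transpose_def)

lemma bounded_linear_trace: "bounded_linear (trace :: real^'n^'n \<Rightarrow> real)"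
  by (auto intro!: linear_conv_bounded_linear[THEN iffD1] linearI
      simp: trace_add trace_def sum_distrib_left)

lemma trace_zero [simp]: "trace (0 :: 'a::semiring_1^'n^'n) = 0"
  by (simp add: trace_def)

lemma inner_matrix_eq_trace: "X \<bullet> Y = trace (X ** transpose Y)"
  for X Y :: "real^'m^'n"
  by (simp add: inner_vec_def trace_def matrix_matrix_mult_def transpose_def)

lemma trace_eq_inner_transpose: "trace (X ** Y) = X \<bullet> transpose Y"
  for X :: "real^'m^'n" and Y :: "real^'n^'m"
  by (simp add: inner_matrix_eq_trace)

lemma inner_mult_right: "X \<bullet> (Y ** Z) = (X ** transpose Z) \<bullet> Y"
  for X :: "real^'c^'r" and Y :: "real^'m^'r"
  by (simp add: inner_matrix_eq_trace matrix_transpose_mul matrix_mul_assoc)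

lemma inner_mult_left: "X \<bullet> (Y ** Z) = (transpose Y ** X) \<bullet> Z"
  for X :: "real^'c^'r" and Y :: "real^'m^'r"
  using trace_mul_sym[of "transpose Y" "X ** transpose Z"]
  by (simp add: inner_matrix_eq_trace matrix_transpose_mul matrix_mul_assoc)

lemma bounded_bilinear_compose_linear:
  assumes f: "bounded_linear f" and g: "bounded_bilinear g"
  shows "bounded_bilinear (\<lambda>x y. f (g x y))"
proof -
  interpret f: bounded_linear f by (rule f)
  interpret g: bounded_bilinear g by (rule g)
  obtain Kf where Kf: "\<And>z. norm (f z) \<le> norm z * Kf" "Kf \<ge> 0"
    using f.pos_bounded by (meson less_imp_le)
  obtain Kg where Kg: "\<And>a b. norm (g a b) \<le> norm a * norm b * Kg"
    using g.bounded by blast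
  show ?thesis
  proof
    have "norm (f (g a b)) \<le> norm a * norm b * (Kg * Kf)" for a b
      using order_trans[OF Kf(1) mult_right_mono[OF Kg Kf(2)]] by (simp add: mult.assoc)
    then show "\<exists>K. \<forall>a b. norm (f (g a b)) \<le> norm a * norm b * K"
      by blast
  qed (simp_all add: g.add_left g.add_right g.scaleR_left g.scaleR_right f.add f.scaleR)
qed

lemma (in bounded_bilinear) has_derivative_vanishing_left:
  assumes f: "(f has_derivative f') (at x within s)" and f0: "f x = 0"
    and g: "(g \<longlongrightarrow> g x) (at x within s)"
  shows "((\<lambda>y. prod (f y) (g y)) has_derivative (\<lambda>h. prod (f' h) (g x))) (at x within s)"
proof -
  obtain KF where KF: "\<And>h. norm (f' h) \<le> norm h * KF"
    using bounded_linear.bounded[OF has_derivative_bounded_linear[OF f]] by blast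
  obtain K where K: "K > 0" "\<And>a b. norm (prod a b) \<le> norm a * norm b * K"
    using pos_bounded by blast
  define Nf where "Nf y = norm (f y - f x - f' (y - x)) / norm (y - x)" for y
  show ?thesis
  proof (rule has_derivativeI_sandwich[of 1])
    show "bounded_linear (\<lambda>h. prod (f' h) (g x))"
      by (rule bounded_linear_compose[OF bounded_linear_left has_derivative_bounded_linear[OF f]])
    have "(Nf \<longlongrightarrow> 0) (at x within s)"
      using f unfolding has_derivative_iff_norm Nf_def[abs_def] by blast
    then have "((\<lambda>y. Nf y * norm (g y) * K + KF * norm (g y - g x) * K)
        \<longlongrightarrow> 0 * norm (g x) * K + KF * norm (g x - g x) * K) (at x within s)"
      by (intro tendsto_intros g)
    then show "((\<lambda>y. Nf y * norm (g y) * K + KF * norm (g y - g x) * K) \<longlongrightarrow> 0) (at x within s)"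
      by simp
  next
    fix y assume "y \<noteq> x"
    let ?D = "f y - f x - f' (y - x)"
    have "norm (prod (f' (y - x)) (g y - g x)) \<le> norm (f' (y - x)) * norm (g y - g x) * K"
      by (rule K(2))
    also have "\<dots> \<le> norm (y - x) * KF * norm (g y - g x) * K"
      using KF K(1) by (intro mult_right_mono) auto
    finally have "norm (prod ?D (g y) + prod (f' (y - x)) (g y - g x))
        \<le> norm ?D * norm (g y) * K + norm (y - x) * KF * norm (g y - g x) * K"
      using K(2)[of ?D "g y"] by (intro norm_triangle_le add_mono) auto
    moreover have "prod ?D (g y) + prod (f' (y - x)) (g y - g x)
        = prod (f y) (g y) - prod (f x) (g x) - prod (f' (y - x)) (g x)"
      using f0 by (simp add: diff_left diff_right zero_left)
    ultimately have "norm (prod (f y) (g y) - prod (f x) (g x) - prod (f' (y - x)) (g x)) / norm (y - x)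
        \<le> (norm ?D * norm (g y) * K + norm (y - x) * KF * norm (g y - g x) * K) / norm (y - x)"
      by (simp add: divide_right_mono)
    also have "\<dots> = Nf y * norm (g y) * K + KF * norm (g y - g x) * K"
      using \<open>y \<noteq> x\<close> by (simp add: Nf_def add_divide_distrib)
    finally show "norm (prod (f y) (g y) - prod (f x) (g x) - prod (f' (y - x)) (g x)) / norm (y - x)
        \<le> Nf y * norm (g y) * K + KF * norm (g y - g x) * K" .
  qed simp
qed

section \<open>Block matrices\<close>

lemma sum_UNIV_sum: "(\<Sum>x\<in>UNIV. f x) = (\<Sum>a\<in>UNIV. f (Inl a)) + (\<Sum>b\<in>UNIV. f (Inr b))"
  for f :: "'a::finite + 'b::finite \<Rightarrow> 'c::comm_monoid_add"
  by (subst UNIV_Plus_UNIV[symmetric], subst sum.Plus) (simp_all add: comp_def)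

definition upper_rows :: "real^'c^('a::finite + 'b::finite) \<Rightarrow> real^'c^'a" where
  "upper_rows M = (\<chi> i j. M $ Inl i $ j)"
definition lower_rows :: "real^'c^('a::finite + 'b::finite) \<Rightarrow> real^'c^'b" where
  "lower_rows M = (\<chi> i j. M $ Inr i $ j)"
definition left_cols :: "real^('a::finite + 'b::finite)^'r \<Rightarrow> real^'a^'r" where
  "left_cols M = (\<chi> i j. M $ i $ Inl j)"
definition right_cols :: "real^('a::finite + 'b::finite)^'r \<Rightarrow> real^'b^'r" where
  "right_cols M = (\<chi> i j. M $ i $ Inr j)"

lemma inner_vcat: "M \<bullet> vcat X Y = upper_rows M \<bullet> X + lower_rows M \<bullet> Y"
  by (simp add: inner_vec_def sum_UNIV_sum vcat_def upper_rows_def lower_rows_def)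

lemma inner_hcat: "M \<bullet> hcat X Y = left_cols M \<bullet> X + right_cols M \<bullet> Y"
  by (simp add: inner_vec_def sum_UNIV_sum hcat_def left_cols_def right_cols_def sum.distrib)

lemma inner_block:
  "M \<bullet> block X11 X12 X21 X22 = blk11 M \<bullet> X11 + blk12 M \<bullet> X12 + blk21 M \<bullet> X21 + blk22 M \<bullet> X22"
  by (simp add: block_def inner_vcat inner_hcat upper_rows_def lower_rows_def left_cols_def
      right_cols_def blk11_def blk12_def blk21_def blk22_def)

lemma lower_rows_mult: "lower_rows (X ** Y) = lower_rows X ** Y"
  by (simp add: lower_rows_def Finite_Cartesian_Product.vec_eq_iff matrix_matrix_mult_def)

lemma right_cols_mult: "right_cols (X ** Y) = X ** right_cols Y"
  by (simp add: right_cols_def Finite_Cartesian_Product.vec_eq_iff matrix_matrix_mult_def)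

lemma brow2_eq_lower_rows: "brow2 M = lower_rows M"
  by (simp add: brow2_def lower_rows_def)

lemma bcol2_eq_right_cols: "bcol2 M = right_cols M"
  by (simp add: bcol2_def right_cols_def)

lemma vcat_0 [simp]: "vcat 0 0 = 0"
  by (simp add: vcat_def Finite_Cartesian_Product.vec_eq_iff split: sum.split)

lemma hcat_0 [simp]: "hcat 0 0 = 0"
  by (simp add: hcat_def Finite_Cartesian_Product.vec_eq_iff split: sum.split)

lemma has_derivative_vcat [derivative_intros]:
  fixes f :: "'a::real_normed_vector \<Rightarrow> real^'c^'r1::finite" and g :: "'a \<Rightarrow> real^'c^'r2::finite"
  assumes "(f has_derivative f') (at x within s)" and "(g has_derivative g') (at x within s)"
  shows "((\<lambda>x. vcat (f x) (g x)) has_derivative (\<lambda>h. vcat (f' h) (g' h))) (at x within s)"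
proof -
  have "bounded_linear (\<lambda>(X, Y). vcat X Y :: real^'c^('r1::finite + 'r2::finite))"
    by (intro linear_conv_bounded_linear[THEN iffD1] linearI)
      (auto simp: vcat_def Finite_Cartesian_Product.vec_eq_iff split: sum.split)
  from bounded_linear.has_derivative[OF this has_derivative_Pair[OF assms]] show ?thesis
    by simp
qed

lemma has_derivative_hcat [derivative_intros]:
  fixes f :: "'a::real_normed_vector \<Rightarrow> real^'c1::finite^'r" and g :: "'a \<Rightarrow> real^'c2::finite^'r"
  assumes "(f has_derivative f') (at x within s)" and "(g has_derivative g') (at x within s)"
  shows "((\<lambda>x. hcat (f x) (g x)) has_derivative (\<lambda>h. hcat (f' h) (g' h))) (at x within s)"
proof -
  have "bounded_linear (\<lambda>(X, Y). hcat X Y :: real^('c1::finite + 'c2::finite)^'r)"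
    by (intro linear_conv_bounded_linear[THEN iffD1] linearI)
      (auto simp: hcat_def Finite_Cartesian_Product.vec_eq_iff split: sum.split)
  from bounded_linear.has_derivative[OF this has_derivative_Pair[OF assms]] show ?thesis
    by simp
qed

lemma has_derivative_block [derivative_intros]:
  assumes "(f11 has_derivative f11') (at x within s)" and "(f12 has_derivative f12') (at x within s)"
    and "(f21 has_derivative f21') (at x within s)" and "(f22 has_derivative f22') (at x within s)"
  shows "((\<lambda>x. block (f11 x) (f12 x) (f21 x) (f22 x)) has_derivative
    (\<lambda>h. block (f11' h) (f12' h) (f21' h) (f22' h))) (at x within s)"
  unfolding block_def by (intro has_derivative_vcat has_derivative_hcat assms)

section \<open>Lyapunov equations for Hurwitz matrices\<close>

lemma lyap_upper_triangular_eq_0: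
  fixes T Y :: "complex mat"
  assumes T: "T \<in> carrier_mat n n" "upper_triangular T" and Y: "Y \<in> carrier_mat n n"
    and diag_neg: "\<And>i. i < n \<Longrightarrow> Re (T $$ (i,i)) < 0"
    and eq: "T * Y + Y * transpose_mat T = 0\<^sub>m n n"
  shows "Y = 0\<^sub>m n n"
proof -
  have below: "T $$ (i,k) = 0" if "i < n" "k < i" for i k
    using T that unfolding upper_triangular_def by auto
  have "Y $$ (i,j) = 0" if "i < n" "j < n" for i j
    using that
  proof (induction "2*n - i - j" arbitrary: i j rule: less_induct)
    case less
    have later: "Y $$ (k,l) = 0" if "k < n" "l < n" "i \<le> k" "j \<le> l" "(k,l) \<noteq> (i,j)" for k l
      using less.hyps[of k l] less.prems that by auto
    have row_terms: "T $$ (i,k) * Y $$ (k,j) = 0" if "k < n" "k \<noteq> i" for k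
      using that less.prems below[of i k] later[of k j] by (cases "k < i") auto
    have row: "(\<Sum>k\<in>{0..<n}. T $$ (i,k) * Y $$ (k,j)) = T $$ (i,i) * Y $$ (i,j)"
      using less.prems by (subst sum.remove[of _ i]) (auto intro!: sum.neutral simp: row_terms)
    have col_terms: "Y $$ (i,k) * T $$ (j,k) = 0" if "k < n" "k \<noteq> j" for k
      using that less.prems below[of j k] later[of i k] by (cases "k < j") auto
    have col: "(\<Sum>k\<in>{0..<n}. Y $$ (i,k) * T $$ (j,k)) = Y $$ (i,j) * T $$ (j,j)"
      using less.prems by (subst sum.remove[of _ j]) (auto intro!: sum.neutral simp: col_terms)
    have "(T * Y + Y * transpose_mat T) $$ (i,j) =
        (\<Sum>k\<in>{0..<n}. T $$ (i,k) * Y $$ (k,j)) + (\<Sum>k\<in>{0..<n}. Y $$ (i,k) * T $$ (j,k))"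
      using T Y less.prems by (simp add: scalar_prod_def)
    then have "(T $$ (i,i) + T $$ (j,j)) * Y $$ (i,j) = 0"
      using eq less.prems row col by (simp add: algebra_simps)
    moreover have "Re (T $$ (i,i) + T $$ (j,j)) < 0"
      using diag_neg[of i] diag_neg[of j] less.prems by simp
    ultimately show ?case by (metis mult_eq_0_iff order_less_irrefl zero_complex.sel(1))
  qed
  then show ?thesis using Y by (intro eq_matI) auto
qed

lemma lyap_equation_similar:
  fixes A B P Q X :: "'a::comm_ring_1 mat"
  assumes carrier: "B \<in> carrier_mat n n" "P \<in> carrier_mat n n" "Q \<in> carrier_mat n n" "X \<in> carrier_mat n n"
    and A: "A = P * B * Q" and QP: "Q * P = 1\<^sub>m n"
  shows "B * (Q * X * transpose_mat Q) + (Q * X * transpose_mat Q) * transpose_mat B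
    = Q * (A * X + X * transpose_mat A) * transpose_mat Q"
proof -
  have PQT: "transpose_mat P * transpose_mat Q = 1\<^sub>m n"
    using transpose_mult[of Q n n P n] carrier QP by simp
  have "A \<in> carrier_mat n n"
    unfolding A using carrier by simp
  then have "Q * (A * X + X * transpose_mat A) * transpose_mat Q
      = Q * (A * X) * transpose_mat Q + Q * (X * transpose_mat A) * transpose_mat Q"
    using carrier
    by (simp add: mult_add_distrib_mat[of Q n n "A * X" n] add_mult_distrib_mat[of "Q * (A * X)" n n])
  also have "Q * (A * X) * transpose_mat Q = (Q * P) * B * (Q * X * transpose_mat Q)"
    unfolding A using carrier by (simp add: assoc_mult_mat[of _ n n _ n _ n])
  also have "Q * (X * transpose_mat A) * transpose_mat Q
      = (Q * X * transpose_mat Q) * transpose_mat B * (transpose_mat P * transpose_mat Q)"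
    unfolding A using carrier
    by (simp add: transpose_mult[of _ n n _ n] assoc_mult_mat[of _ n n _ n _ n])
  finally show ?thesis
    using carrier QP PQT by simp
qed

lemma lyap_eq_0_if_eigenvalues_neg:
  fixes A X :: "complex mat"
  assumes A: "A \<in> carrier_mat n n" and ev: "\<And>e. eigenvalue A e \<Longrightarrow> Re e < 0"
    and X: "X \<in> carrier_mat n n" and eq: "A * X + X * transpose_mat A = 0\<^sub>m n n"
  shows "X = 0\<^sub>m n n"
proof -
  obtain es where cp: "char_poly A = (\<Prod>e\<leftarrow>es. [:- e, 1:])"
    using char_poly_factorized[OF A] by blast
  obtain B P Q where schur: "schur_decomposition A es = (B, P, Q)"
    by (cases "schur_decomposition A es") auto
  from schur_decomposition[OF A cp schur] have sim: "similar_mat_wit A B P Q"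
    and ut: "upper_triangular B" and diag: "diag_mat B = es" by auto
  from sim A have carrier: "B \<in> carrier_mat n n" "P \<in> carrier_mat n n" "Q \<in> carrier_mat n n"
    and PQ: "P * Q = 1\<^sub>m n" and QP: "Q * P = 1\<^sub>m n" and APBQ: "A = P * B * Q"
    unfolding similar_mat_wit_def Let_def by auto
  have "Re (B $$ (i,i)) < 0" if "i < n" for i
  proof (rule ev)
    have "B $$ (i,i) \<in> set es"
      using diag that carrier unfolding diag_mat_def by auto
    then have "poly (char_poly A) (B $$ (i,i)) = 0"
      unfolding cp by (induction es) (auto simp: poly_prod_list)
    then show "eigenvalue A (B $$ (i,i))"
      using eigenvalue_root_char_poly[OF A] by simp
  qed
  moreover have "B * (Q * X * transpose_mat Q) + (Q * X * transpose_mat Q) * transpose_mat B = 0\<^sub>m n n"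
    using lyap_equation_similar[OF carrier X APBQ QP] carrier by (simp add: eq)
  ultimately have Y0: "Q * X * transpose_mat Q = 0\<^sub>m n n"
    using lyap_upper_triangular_eq_0[OF carrier(1) ut] carrier X by simp
  have "X = (P * Q) * X * transpose_mat (P * Q)"
    using carrier X PQ by simp
  also have "\<dots> = P * (Q * X * transpose_mat Q) * transpose_mat P"
    using carrier X by (simp add: transpose_mult[of P n n Q n] assoc_mult_mat[of _ n n _ n _ n])
  finally show ?thesis
    using Y0 carrier by simp
qed

lemma bij_betw_nat_inverse:
  fixes n :: nat
  assumes f: "bij_betw f {0..<n} (UNIV :: 'k set)"
  obtains g where "\<And>y. g y < n" "\<And>y. f (g y) = y" "\<And>i. i < n \<Longrightarrow> g (f i) = i"
proof
  show "inv_into {0..<n} f y < n" for y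
    using inv_into_into[of y f "{0..<n}"] bij_betw_imp_surj_on[OF f] by auto
  show "f (inv_into {0..<n} f y) = y" for y
    using bij_betw_inv_into_right[OF f] by simp
  show "inv_into {0..<n} f (f i) = i" if "i < n" for i
    using bij_betw_inv_into_left[OF f, of i] that by simp
qed

text \<open>Schur decomposition is only available for matrices of type \<open>mat\<close>, so real matrices are
  transferred along an enumeration \<open>f\<close> of the index type.\<close>

definition to_complex_mat :: "(nat \<Rightarrow> 'k::finite) \<Rightarrow> real^'k^'k \<Rightarrow> complex mat" where
  "to_complex_mat f M = Matrix.mat CARD('k) CARD('k) (\<lambda>(i,j). complex_of_real (M $ f i $ f j))"

lemma to_complex_mat_carrier [simp]: "to_complex_mat f M \<in> carrier_mat CARD('k) CARD('k)"
  for M :: "real^'k::finite^'k"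
  by (simp add: to_complex_mat_def)

lemma to_complex_mat_add: "to_complex_mat f (X + Y) = to_complex_mat f X + to_complex_mat f Y"
  by (auto simp: to_complex_mat_def)

lemma to_complex_mat_transpose: "to_complex_mat f (transpose X) = transpose_mat (to_complex_mat f X)"
  by (auto simp: to_complex_mat_def transpose_def)

lemma to_complex_mat_mult:
  assumes f: "bij_betw f {0..<CARD('k)} (UNIV :: 'k::finite set)"
  shows "to_complex_mat f (X ** Y) = to_complex_mat f X * to_complex_mat f (Y :: real^'k^'k)"
proof (rule eq_matI)
  fix i j assume "i < dim_row (to_complex_mat f X * to_complex_mat f Y)"
    and "j < dim_col (to_complex_mat f X * to_complex_mat f Y)"
  then show "to_complex_mat f (X ** Y) $$ (i,j) = (to_complex_mat f X * to_complex_mat f Y) $$ (i,j)"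
    using sum.reindex_bij_betw[OF f, of "\<lambda>k. complex_of_real (X $ f i $ k * Y $ k $ f j)"]
    by (simp add: to_complex_mat_def matrix_matrix_mult_def scalar_prod_def)
qed (simp_all add: to_complex_mat_def)

lemma to_complex_mat_eq_0:
  assumes f: "bij_betw f {0..<CARD('k)} (UNIV :: 'k::finite set)"
    and "to_complex_mat f X = 0\<^sub>m CARD('k) CARD('k)"
  shows "X = 0"
proof -
  have entries: "X $ f i $ f j = 0" if "i < CARD('k)" "j < CARD('k)" for i j
  proof -
    have "to_complex_mat f X $$ (i,j) = 0"
      using assms(2) that by simp
    then show ?thesis
      using that by (simp add: to_complex_mat_def)
  qed
  obtain g where "\<And>y. g y < CARD('k)" "\<And>y. f (g y) = y"
    using bij_betw_nat_inverse[OF f] by metis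
  then have "X $ y $ z = 0" for y z
    using entries[of "g y" "g z"] by simp
  then show ?thesis
    by (simp add: Finite_Cartesian_Product.vec_eq_iff)
qed

lemma det_eq_0_if_eigenvalue_to_complex_mat:
  fixes M :: "real^'k::finite^'k"
  assumes f: "bij_betw f {0..<CARD('k)} (UNIV :: 'k set)"
    and "eigenvalue (to_complex_mat f M) e"
  shows "Determinants.det (Finite_Cartesian_Product.mat e - (\<chi> i j. complex_of_real (M $ i $ j))) = 0"
proof -
  let ?Mc = "\<chi> i j. complex_of_real (M $ i $ j)"
  obtain v where v: "v \<in> carrier_vec CARD('k)" "v \<noteq> 0\<^sub>v CARD('k)"
    and Mv: "to_complex_mat f M *\<^sub>v v = e \<cdot>\<^sub>v v"
    using assms(2) unfolding eigenvalue_def eigenvector_def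
    by (auto simp: carrier_matD[OF to_complex_mat_carrier])
  obtain g where g: "\<And>y. g y < CARD('k)" "\<And>y. f (g y) = y" "\<And>i. i < CARD('k) \<Longrightarrow> g (f i) = i"
    using bij_betw_nat_inverse[OF f] by metis
  define w where "w = (\<chi> y. vec_index v (g y))"
  have "(?Mc *v w) $ y = (e *s w) $ y" for y
  proof -
    have "(?Mc *v w) $ y = (\<Sum>k\<in>{0..<CARD('k)}. complex_of_real (M $ f (g y) $ f k) * vec_index v k)"
      using sum.reindex_bij_betw[OF f, of "\<lambda>z. complex_of_real (M $ y $ z) * vec_index v (g z)"]
      by (simp add: matrix_vector_mult_def w_def g)
    also have "\<dots> = vec_index (to_complex_mat f M *\<^sub>v v) (g y)"
      using g v by (simp add: to_complex_mat_def scalar_prod_def)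
    finally show ?thesis
      using Mv g v by (simp add: w_def)
  qed
  moreover have "Finite_Cartesian_Product.mat e *v w = e *s w"
    by (simp add: Finite_Cartesian_Product.vec_eq_iff matrix_vector_mult_def
        Finite_Cartesian_Product.mat_def if_distrib[of "\<lambda>x. x * _"] cong: if_cong)
  ultimately have "(Finite_Cartesian_Product.mat e - ?Mc) *v w = 0"
    by (simp add: Finite_Cartesian_Product.vec_eq_iff matrix_vector_mult_diff_rdistrib)
  moreover have "w \<noteq> 0"
  proof
    assume "w = 0"
    moreover have "vec_index v i = w $ f i" if "i < CARD('k)" for i
      using that g by (simp add: w_def)
    ultimately have "vec_index v i = 0" if "i < CARD('k)" for i
      using that by simp
    then have "v = 0\<^sub>v CARD('k)"
      using v by (intro eq_vecI) auto
    then show False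
      using v by simp
  qed
  ultimately have "\<not> inj ((*v) (Finite_Cartesian_Product.mat e - ?Mc))"
    by (metis injD matrix_vector_mult_0_right)
  then show ?thesis
    using inj_matrix_vector_mult invertible_det_nz by blast
qed

definition lyap_op :: "real^'k^'k \<Rightarrow> real^'k^'k \<Rightarrow> real^'k^'k" where
  "lyap_op M X = M ** X + X ** transpose M"

lemma bounded_bilinear_lyap_op: "bounded_bilinear (lyap_op :: real^'k^'k \<Rightarrow> _)"
proof -
  interpret mult: bounded_bilinear "(**) :: real^'k^'k \<Rightarrow> real^'k^'k \<Rightarrow> real^'k^'k"
    by (rule bounded_bilinear_matrix_mult)
  interpret transpose: bounded_linear "transpose :: real^'k^'k \<Rightarrow> real^'k^'k"
    by (rule bounded_linear_transpose)
  have "bilinear (lyap_op :: real^'k^'k \<Rightarrow> real^'k^'k \<Rightarrow> real^'k^'k)"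
    unfolding bilinear_def lyap_op_def
    by (auto intro!: linearI simp: mult.add_left mult.add_right mult.scaleR_left mult.scaleR_right
        transpose.add transpose.scaleR scaleR_add_right)
  then show ?thesis
    by (simp add: bilinear_conv_bounded_bilinear)
qed

lemma linear_lyap_op: "linear (lyap_op M)"
  using bounded_bilinear.bounded_linear_right[OF bounded_bilinear_lyap_op]
  by (rule bounded_linear.linear)

lemma transpose_lyap_op: "transpose (lyap_op M X) = lyap_op M (transpose X)"
  by (simp add: lyap_op_def matrix_transpose_add matrix_transpose_mul add.commute)

lemma inner_lyap_op_adjoint: "lyap_op M X \<bullet> Y = X \<bullet> lyap_op (transpose M) Y"
proof -
  have "trace (M ** X ** transpose Y) = trace (X ** (transpose Y ** M))"
    using trace_mul_sym[of M "X ** transpose Y"] by (simp add: matrix_mul_assoc)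
  then show ?thesis
    by (simp add: inner_matrix_eq_trace lyap_op_def matrix_transpose_add matrix_transpose_mul
        matrix_add_ldistrib matrix_add_rdistrib trace_add matrix_mul_assoc)
qed

lemma inj_lyap_op_iff: "inj (lyap_op M) \<longleftrightarrow> (\<forall>X. lyap_op M X = 0 \<longrightarrow> X = 0)"
  using linear_injective_0[OF linear_lyap_op] by blast

lemma inj_lyap_op_transpose:
  assumes "inj (lyap_op M)"
  shows "inj (lyap_op (transpose M))"
  unfolding inj_lyap_op_iff
proof (intro allI impI)
  fix Y assume Y: "lyap_op (transpose M) Y = 0"
  obtain X where "lyap_op M X = Y"
    using linear_injective_imp_surjective[OF linear_lyap_op assms] by (metis surjD)
  then have "Y \<bullet> Y = X \<bullet> lyap_op (transpose M) Y"
    using inner_lyap_op_adjoint[of M X Y] by simp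
  then show "Y = 0"
    using Y by simp
qed

lemma inj_lyap_op_if_hurwitz:
  fixes M :: "real^'k^'k"
  assumes "hurwitz M"
  shows "inj (lyap_op M)"
  unfolding inj_lyap_op_iff
proof (intro allI impI)
  fix X assume X: "lyap_op M X = 0"
  obtain f where f: "bij_betw f {0..<CARD('k)} (UNIV :: 'k set)"
    using ex_bij_betw_nat_finite[of "UNIV :: 'k set"] by auto
  have "Re e < 0" if "eigenvalue (to_complex_mat f M) e" for e
    using assms det_eq_0_if_eigenvalue_to_complex_mat[OF f that] unfolding hurwitz_def by blast
  moreover have "to_complex_mat f M * to_complex_mat f X + to_complex_mat f X * transpose_mat (to_complex_mat f M)
      = to_complex_mat f (lyap_op M X)"
    by (simp add: lyap_op_def to_complex_mat_add to_complex_mat_mult[OF f] to_complex_mat_transpose)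
  moreover have "to_complex_mat f (lyap_op M X) = 0\<^sub>m CARD('k) CARD('k)"
    unfolding X by (auto simp: to_complex_mat_def)
  ultimately have "to_complex_mat f X = 0\<^sub>m CARD('k) CARD('k)"
    using lyap_eq_0_if_eigenvalues_neg[OF to_complex_mat_carrier _ to_complex_mat_carrier] by metis
  then show "X = 0"
    by (rule to_complex_mat_eq_0[OF f])
qed

lemma lyap_eq_iff:
  assumes "inj (lyap_op M)"
  shows "lyap M W = X \<longleftrightarrow> lyap_op M X + W = 0"
proof -
  obtain X0 where X0: "lyap_op M X0 = - W"
    using linear_injective_imp_surjective[OF linear_lyap_op assms] by (metis surjD)
  have "Y = X0" if "lyap_op M Y + W = 0" for Y
    using injD[OF assms, of Y X0] that X0 by (simp add: eq_neg_iff_add_eq_0)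
  moreover have "lyap_op M X0 + W = 0"
    using X0 by simp
  ultimately have unique: "\<exists>!X. lyap_op M X + W = 0"
    by blast
  have lyap: "lyap M W = (THE X. lyap_op M X + W = 0)"
    by (simp add: lyap_def lyap_op_def)
  show ?thesis
    unfolding lyap using theI'[OF unique] the1_equality[OF unique] by blast
qed

lemma lyap_op_lyap:
  assumes "inj (lyap_op M)"
  shows "lyap_op M (lyap M W) + W = 0"
  using lyap_eq_iff[OF assms] by blast

lemma lyap_symmetric:
  assumes "inj (lyap_op M)" and "transpose W = W"
  shows "transpose (lyap M W) = lyap M W"
proof -
  have "lyap_op M (transpose (lyap M W)) + W = transpose (lyap_op M (lyap M W) + W)"
    by (simp add: matrix_transpose_add transpose_lyap_op assms(2))
  then have "lyap M W = transpose (lyap M W)"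
    using lyap_eq_iff[OF assms(1)] lyap_op_lyap[OF assms(1)] by simp
  then show ?thesis
    by simp
qed

section \<open>Continuous dependence of the solution\<close>

lemma lyap_op_bounded_below_near:
  fixes M0 :: "real^'k^'k"
  assumes "inj (lyap_op M0)"
  obtains e d where "e > 0" "d > 0" "\<And>M X. norm (M - M0) < d \<Longrightarrow> e * norm X \<le> norm (lyap_op M X)"
proof -
  interpret L: bounded_bilinear "lyap_op :: real^'k^'k \<Rightarrow> _"
    by (rule bounded_bilinear_lyap_op)
  obtain B where B: "B > 0" "\<And>X. B * norm X \<le> norm (lyap_op M0 X)"
    using linear_inj_bounded_below_pos[OF linear_lyap_op assms] by blast
  obtain K where K: "K > 0" "\<And>M X :: real^'k^'k. norm (lyap_op M X) \<le> norm M * norm X * K"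
    using L.pos_bounded by blast
  have "B / 2 * norm X \<le> norm (lyap_op M X)" if M: "norm (M - M0) < B / (2 * K)" for M X
  proof -
    have "norm (lyap_op (M - M0) X) \<le> B / (2 * K) * norm X * K"
      using K(2)[of "M - M0" X] M K(1) by (smt (verit) mult_right_mono norm_ge_zero)
    also have "\<dots> = B / 2 * norm X"
      using K(1) by simp
    finally have "norm (lyap_op (M - M0) X) \<le> B / 2 * norm X" .
    moreover have "lyap_op M X = lyap_op M0 X + lyap_op (M - M0) X"
      by (simp add: L.diff_left)
    ultimately show ?thesis
      using B(2)[of X] norm_triangle_ineq2[of "lyap_op M0 X" "- lyap_op (M - M0) X"] by simp
  qed
  then show thesis
    using that[of "B / 2" "B / (2 * K)"] B(1) K(1) by simp
qed

lemma inj_lyap_op_if_bounded_below: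
  assumes "e > 0" and "\<And>X. e * norm X \<le> norm (lyap_op M X)"
  shows "inj (lyap_op M)"
  unfolding inj_lyap_op_iff
proof (intro allI impI)
  fix X assume "lyap_op M X = 0"
  then have "e * norm X \<le> 0"
    using assms(2)[of X] by simp
  then show "X = 0"
    using assms(1) by (simp add: mult_le_0_iff)
qed

lemma eventually_inj_lyap_op:
  assumes "inj (lyap_op A0)" and "(Af \<longlongrightarrow> A0) F"
  shows "eventually (\<lambda>x. inj (lyap_op (Af x))) F"
proof -
  obtain e d where e: "e > 0" and d: "d > 0"
    and below: "\<And>M X. norm (M - A0) < d \<Longrightarrow> e * norm X \<le> norm (lyap_op M X)"
    using lyap_op_bounded_below_near[OF assms(1)] by blast
  have "eventually (\<lambda>x. norm (Af x - A0) < d) F"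
    using assms(2) d by (simp add: tendsto_iff dist_norm)
  then show ?thesis
  proof eventually_elim
    case (elim x)
    show ?case
      using e below[OF elim] by (rule inj_lyap_op_if_bounded_below)
  qed
qed

lemma tendsto_lyap:
  fixes Af Wf :: "'a \<Rightarrow> real^'k^'k"
  assumes inj: "inj (lyap_op A0)" and A: "(Af \<longlongrightarrow> A0) F" and W: "(Wf \<longlongrightarrow> W0) F"
  shows "((\<lambda>x. lyap (Af x) (Wf x)) \<longlongrightarrow> lyap A0 W0) F"
proof -
  interpret L: bounded_bilinear "lyap_op :: real^'k^'k \<Rightarrow> _"
    by (rule bounded_bilinear_lyap_op)
  obtain e d where e: "e > 0" and d: "d > 0"
    and below: "\<And>M X. norm (M - A0) < d \<Longrightarrow> e * norm X \<le> norm (lyap_op M X)"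
    using lyap_op_bounded_below_near[OF inj] by blast
  define P0 where "P0 = lyap A0 W0"
  \<comment> \<open>\<open>lyap (Af x) (Wf x) - P0\<close> solves a Lyapunov equation whose right-hand side tends to 0.\<close>
  define R where "R x = Wf x + lyap_op (Af x) P0" for x
  have "(R \<longlongrightarrow> W0 + lyap_op A0 P0) F"
    unfolding R_def by (intro tendsto_intros W L.tendsto A)
  then have R0: "(R \<longlongrightarrow> 0) F"
    using lyap_op_lyap[OF inj] by (simp add: P0_def add.commute)
  have "eventually (\<lambda>x. norm (Af x - A0) < d) F"
    using A d by (simp add: tendsto_iff dist_norm)
  then have "eventually (\<lambda>x. norm (lyap (Af x) (Wf x) - P0) \<le> norm (R x) / e) F"
  proof eventually_elim
    case (elim x)
    have "inj (lyap_op (Af x))"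
      using e below[OF elim] by (rule inj_lyap_op_if_bounded_below)
    then have "lyap_op (Af x) (lyap (Af x) (Wf x) - P0) = - R x"
      using lyap_op_lyap by (simp add: R_def L.diff_right eq_neg_iff_add_eq_0 algebra_simps)
    then have "e * norm (lyap (Af x) (Wf x) - P0) \<le> norm (R x)"
      using below[OF elim, of "lyap (Af x) (Wf x) - P0"] by simp
    then show ?case
      using e by (simp add: field_simps)
  qed
  then have "((\<lambda>x. lyap (Af x) (Wf x) - P0) \<longlongrightarrow> 0) F"
    by (rule Lim_null_comparison) (intro tendsto_divide_zero tendsto_norm_zero R0)
  then show ?thesis
    by (simp add: P0_def LIM_zero_iff)
qed

section \<open>Differentiating the cost\<close>

lemma trace_lyap_op_adjoint: "trace (lyap_op (transpose M) Q ** P) = trace (Q ** lyap_op M P)"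
  using inner_lyap_op_adjoint[of "transpose M" Q "transpose P"]
  by (simp add: trace_eq_inner_transpose transpose_lyap_op)

lemma trace_lyap_perturbation:
  fixes A A0 P Q V V0 W :: "real^'k^'k"
  assumes "lyap_op A P + W = 0" and "lyap_op (transpose A0) Q + V0 = 0"
  shows "trace (V ** P) = trace ((V - V0) ** P) + trace (Q ** W) + trace (Q ** lyap_op (A - A0) P)"
proof -
  interpret mult: bounded_bilinear "(**) :: real^'k^'k \<Rightarrow> real^'k^'k \<Rightarrow> real^'k^'k"
    by (rule bounded_bilinear_matrix_mult)
  interpret L: bounded_bilinear "lyap_op :: real^'k^'k \<Rightarrow> _"
    by (rule bounded_bilinear_lyap_op)
  interpret tr: bounded_linear "trace :: real^'k^'k \<Rightarrow> real"
    by (rule bounded_linear_trace)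
  have "W = - lyap_op A P" and "V0 = - lyap_op (transpose A0) Q"
    using assms by (simp_all add: eq_neg_iff_add_eq_0 add.commute)
  then show ?thesis
    using trace_lyap_op_adjoint[of A0 Q P]
    by (simp add: mult.add_left mult.diff_right mult.minus_left mult.minus_right L.diff_left
        tr.add tr.diff tr.neg)
qed

lemma has_derivative_trace_perturbation:
  fixes Af Vf Wf Pf :: "'a::real_normed_vector \<Rightarrow> real^'k^'k"
  assumes A: "(Af has_derivative A') (at x)" and V: "(Vf has_derivative V') (at x)"
    and W: "(Wf has_derivative W') (at x)" and P: "(Pf \<longlongrightarrow> Pf x) (at x)"
  shows "((\<lambda>y. trace ((Vf y - Vf x) ** Pf y) + trace (Q ** Wf y) + trace (Q ** lyap_op (Af y - Af x) (Pf y)))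
    has_derivative (\<lambda>h. trace (V' h ** Pf x) + trace (Q ** W' h) + trace (Q ** lyap_op (A' h) (Pf x))))
    (at x)"
proof -
  have trace_Q: "bounded_linear (\<lambda>X :: real^'k^'k. trace (Q ** X))"
    by (rule bounded_linear_compose[OF bounded_linear_trace
          bounded_bilinear.bounded_linear_right[OF bounded_bilinear_matrix_mult]])
  have "((\<lambda>y. Vf y - Vf x) has_derivative V') (at x)" and "((\<lambda>y. Af y - Af x) has_derivative A') (at x)"
    using has_derivative_diff[OF V has_derivative_const] has_derivative_diff[OF A has_derivative_const]
    by simp_all
  then have "((\<lambda>y. trace ((Vf y - Vf x) ** Pf y)) has_derivative (\<lambda>h. trace (V' h ** Pf x))) (at x)"
    and "((\<lambda>y. trace (Q ** lyap_op (Af y - Af x) (Pf y))) has_derivative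
      (\<lambda>h. trace (Q ** lyap_op (A' h) (Pf x)))) (at x)"
    by (auto intro!: P bounded_bilinear.has_derivative_vanishing_left[where prod = "\<lambda>U P. trace (U ** P)"]
        bounded_bilinear.has_derivative_vanishing_left[where prod = "\<lambda>U P. trace (Q ** lyap_op U P)"]
        bounded_bilinear_compose_linear[OF bounded_linear_trace bounded_bilinear_matrix_mult]
        bounded_bilinear_compose_linear[OF trace_Q bounded_bilinear_lyap_op])
  then show ?thesis
    by (intro has_derivative_add bounded_linear.has_derivative[OF trace_Q W])
qed

lemma has_derivative_trace_lyap:
  fixes Af Vf Wf :: "'a::real_normed_vector \<Rightarrow> real^'k^'k"
  assumes A: "(Af has_derivative A') (at x)" and V: "(Vf has_derivative V') (at x)"
    and W: "(Wf has_derivative W') (at x)" and inj: "inj (lyap_op (Af x))"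
  defines "P \<equiv> lyap (Af x) (Wf x)" and "Q \<equiv> lyap (transpose (Af x)) (Vf x)"
  shows "((\<lambda>y. trace (Vf y ** lyap (Af y) (Wf y))) has_derivative
    (\<lambda>h. trace (V' h ** P) + trace (Q ** W' h) + trace (Q ** lyap_op (A' h) P))) (at x)"
proof -
  have Ac: "(Af \<longlongrightarrow> Af x) (at x)" and Wc: "(Wf \<longlongrightarrow> Wf x) (at x)"
    using A W by (simp_all add: has_derivative_continuous continuous_at[symmetric])
  define Pf where "Pf y = lyap (Af y) (Wf y)" for y
  define F where "F y = trace ((Vf y - Vf x) ** Pf y) + trace (Q ** Wf y)
    + trace (Q ** lyap_op (Af y - Af x) (Pf y))" for y
  \<comment> \<open>By the primal and adjoint Lyapunov equations the cost agrees with \<open>F\<close> near \<open>x\<close>, and in \<open>F\<close>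
    the solution \<open>Pf\<close> is only multiplied by factors vanishing at \<open>x\<close>, so its continuity suffices.\<close>
  have eq_near: "eventually (\<lambda>y. F y = trace (Vf y ** lyap (Af y) (Wf y))) (at x)"
    using eventually_inj_lyap_op[OF inj Ac]
  proof eventually_elim
    case (elim y)
    show ?case
      using trace_lyap_perturbation[OF lyap_op_lyap[OF elim]
          lyap_op_lyap[OF inj_lyap_op_transpose[OF inj]]]
      by (simp add: F_def Pf_def Q_def)
  qed
  have eq_at: "F x = trace (Vf x ** lyap (Af x) (Wf x))"
    using trace_lyap_perturbation[OF lyap_op_lyap[OF inj, of "Wf x"]
        lyap_op_lyap[OF inj_lyap_op_transpose[OF inj], of "Vf x"], of "Vf x"]
    by (simp add: F_def Pf_def Q_def bounded_bilinear.zero_left[OF bounded_bilinear_lyap_op])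
  have "(Pf \<longlongrightarrow> Pf x) (at x)"
    unfolding Pf_def by (rule tendsto_lyap[OF inj Ac Wc])
  from has_derivative_trace_perturbation[OF A V W this]
  have "(F has_derivative (\<lambda>h. trace (V' h ** P) + trace (Q ** W' h) + trace (Q ** lyap_op (A' h) P)))
      (at x)"
    unfolding F_def P_def Pf_def .
  from has_derivative_transform_eventually[OF this eq_near eq_at] show ?thesis
    by simp
qed

lemma trace_lyap_op_symmetric:
  assumes "transpose P = P" and "transpose Q = Q"
  shows "trace (Q ** lyap_op E P) = 2 * ((Q ** P) \<bullet> E)"
proof -
  have "trace (Q ** (E ** P)) = trace (E ** transpose (Q ** P))"
    using trace_mul_sym[of Q "E ** P"] assms by (simp add: matrix_mul_assoc matrix_transpose_mul)
  then show ?thesis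
    by (simp add: lyap_op_def matrix_add_ldistrib trace_add matrix_mul_assoc
        inner_matrix_eq_trace[symmetric] inner_commute)
qed

lemma trace_outer_symmetric:
  fixes Q :: "real^'k^'k" and B H :: "real^'m^'k"
  assumes "transpose Q = Q"
  shows "trace (Q ** (B ** transpose H + H ** transpose B)) = 2 * ((Q ** B) \<bullet> H)"
proof -
  have "trace (Q ** (H ** transpose B)) = trace (H ** transpose (Q ** B))"
    using trace_mul_sym[of Q "H ** transpose B"] assms
    by (simp add: matrix_mul_assoc matrix_transpose_mul)
  then show ?thesis
    by (simp add: matrix_add_ldistrib trace_add matrix_mul_assoc
        inner_matrix_eq_trace[symmetric] inner_commute)
qed

lemma trace_gram_symmetric:
  fixes P :: "real^'k^'k" and G H :: "real^'k^'p"
  assumes "transpose P = P"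
  shows "trace ((transpose G ** H + transpose H ** G) ** P) = 2 * ((G ** P) \<bullet> H)"
proof -
  have "trace (transpose G ** H ** P) = trace (H ** transpose (G ** P))"
    using trace_mul_sym[of "transpose G" "H ** P"] assms
    by (simp add: matrix_mul_assoc matrix_transpose_mul)
  moreover have "trace (transpose H ** G ** P) = trace (G ** P ** transpose H)"
    using trace_mul_sym[of "transpose H" "G ** P"] by (simp add: matrix_mul_assoc)
  ultimately show ?thesis
    by (simp add: matrix_add_rdistrib trace_add inner_matrix_eq_trace[symmetric] inner_commute)
qed

lemma has_derivative_lyap_cost:
  fixes Af :: "'a::real_normed_vector \<Rightarrow> real^'k^'k" and Bf :: "'a \<Rightarrow> real^'m^'k"
    and Gf :: "'a \<Rightarrow> real^'k^'p"
  assumes A: "(Af has_derivative A') (at x)" and B: "(Bf has_derivative B') (at x)"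
    and G: "(Gf has_derivative G') (at x)" and inj: "inj (lyap_op (Af x))"
  defines "P \<equiv> lyap (Af x) (Bf x ** transpose (Bf x))"
    and "Q \<equiv> lyap (transpose (Af x)) (transpose (Gf x) ** Gf x)"
  shows "((\<lambda>y. trace (Gf y ** lyap (Af y) (Bf y ** transpose (Bf y)) ** transpose (Gf y)))
    has_derivative (\<lambda>h. 2 * ((Q ** P) \<bullet> A' h + (Q ** Bf x) \<bullet> B' h + (Gf x ** P) \<bullet> G' h))) (at x)"
proof -
  have P_sym: "transpose P = P" and Q_sym: "transpose Q = Q"
    using lyap_symmetric[OF inj] lyap_symmetric[OF inj_lyap_op_transpose[OF inj]]
    by (simp_all add: P_def Q_def matrix_transpose_mul)
  have "trace (Gf y ** lyap (Af y) (Bf y ** transpose (Bf y)) ** transpose (Gf y))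
      = trace ((transpose (Gf y) ** Gf y) ** lyap (Af y) (Bf y ** transpose (Bf y)))" for y
    using trace_mul_sym[of "transpose (Gf y)" "Gf y ** lyap (Af y) (Bf y ** transpose (Bf y))"]
    by (simp add: matrix_mul_assoc)
  moreover have "((\<lambda>y. trace ((transpose (Gf y) ** Gf y) ** lyap (Af y) (Bf y ** transpose (Bf y))))
    has_derivative (\<lambda>h. trace ((transpose (Gf x) ** G' h + transpose (G' h) ** Gf x) ** P)
      + trace (Q ** (Bf x ** transpose (B' h) + B' h ** transpose (Bf x)))
      + trace (Q ** lyap_op (A' h) P))) (at x)"
    unfolding P_def Q_def
    by (intro has_derivative_trace_lyap A inj has_derivative_matrix_mult B G
        bounded_linear.has_derivative[OF bounded_linear_transpose])
  ultimately show ?thesis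
    unfolding trace_gram_symmetric[OF P_sym] trace_outer_symmetric[OF Q_sym]
      trace_lyap_op_symmetric[OF P_sym Q_sym]
    by (simp add: algebra_simps)
qed

lemma has_derivative_cost:
  assumes a: "(af has_derivative a') (at x)" and b: "(bf has_derivative b') (at x)"
    and c: "(cf has_derivative c') (at x)"
    and hurwitz: "hurwitz (clA A B2 C (af x) (bf x) (cf x))"
  shows "((\<lambda>y. cost A B1 B2 C D C0 D0 (af y) (bf y) (cf y)) has_derivative
    (\<lambda>h. 2 * (Hmat A B1 B2 C D C0 D0 (af x) (bf x) (cf x) \<bullet> block 0 (B2 ** c' h) (b' h ** bfC C) (a' h)
      + (gramQ A B2 C C0 D0 (af x) (bf x) (cf x) ** clB B1 B2 D (bf x)) \<bullet> vcat 0 (b' h ** bfD D)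
      + (clC C0 D0 (cf x) ** gramP A B1 B2 C D (af x) (bf x) (cf x)) \<bullet> hcat 0 (D0 ** c' h))))
    (at x)"
proof -
  have "((\<lambda>y. clA A B2 C (af y) (bf y) (cf y)) has_derivative
      (\<lambda>h. block 0 (B2 ** c' h) (b' h ** bfC C) (a' h))) (at x)"
    unfolding clA_def
    by (rule has_derivative_eq_rhs[OF has_derivative_block[OF has_derivative_const
          has_derivative_matrix_mult[OF has_derivative_const c]
          has_derivative_matrix_mult[OF b has_derivative_const] a]]) simp
  moreover have "((\<lambda>y. clB B1 B2 D (bf y)) has_derivative (\<lambda>h. vcat 0 (b' h ** bfD D))) (at x)"
    unfolding clB_def
    by (rule has_derivative_eq_rhs[OF has_derivative_vcat[OF has_derivative_const
          has_derivative_matrix_mult[OF b has_derivative_const]]]) simp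
  moreover have "((\<lambda>y. clC C0 D0 (cf y)) has_derivative (\<lambda>h. hcat 0 (D0 ** c' h))) (at x)"
    unfolding clC_def
    by (rule has_derivative_eq_rhs[OF has_derivative_hcat[OF has_derivative_const
          has_derivative_matrix_mult[OF has_derivative_const c]]]) simp
  ultimately show ?thesis
    using has_derivative_lyap_cost inj_lyap_op_if_hurwitz[OF hurwitz]
    unfolding cost_def gramP_def gramQ_def Hmat_def by blast
qed

theorem lemma3:
  fixes A :: "real^'n^'n" and B1 :: "real^'m1^'n" and B2 :: "real^'m2^'n"
    and C :: "real^'n^'p" and D :: "real^'m1^'p"
    and C0 :: "real^'n^'p0" and D0 :: "real^'m2^'p0"
    and a :: "real^'n^'n" and b :: "real^('m2+'p)^'n" and c :: "real^'n^'m2"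
  assumes "hurwitz (clA A B2 C a b c)"
  defines "P \<equiv> gramP A B1 B2 C D a b c"
      and "Q \<equiv> gramQ A B2 C C0 D0 a b c"
      and "H \<equiv> Hmat A B1 B2 C D C0 D0 a b c"
  shows "((\<lambda>x. cost A B1 B2 C D C0 D0 x b c)
            has_derivative (\<lambda>X. (2 *\<^sub>R blk22 H) \<bullet> X)) (at a)
     \<and> ((\<lambda>y. cost A B1 B2 C D C0 D0 a y c)
            has_derivative (\<lambda>Y. (2 *\<^sub>R (blk21 H ** transpose (bfC C)
                 + brow2 Q ** clB B1 B2 D b ** transpose (bfD D))) \<bullet> Y)) (at b)
     \<and> ((\<lambda>z. cost A B1 B2 C D C0 D0 a b z)
            has_derivative (\<lambda>Z. (2 *\<^sub>R (transpose B2 ** blk12 H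
                 + transpose D0 ** clC C0 D0 c ** bcol2 P)) \<bullet> Z)) (at c)"
proof (intro conjI)
  show "((\<lambda>x. cost A B1 B2 C D C0 D0 x b c) has_derivative (\<lambda>X. (2 *\<^sub>R blk22 H) \<bullet> X)) (at a)"
    by (rule has_derivative_eq_rhs[OF has_derivative_cost[OF has_derivative_ident has_derivative_const
          has_derivative_const assms(1)]])
      (simp add: H_def inner_block)
  show "((\<lambda>y. cost A B1 B2 C D C0 D0 a y c) has_derivative (\<lambda>Y. (2 *\<^sub>R (blk21 H ** transpose (bfC C)
      + brow2 Q ** clB B1 B2 D b ** transpose (bfD D))) \<bullet> Y)) (at b)"
    by (rule has_derivative_eq_rhs[OF has_derivative_cost[OF has_derivative_const has_derivative_ident
          has_derivative_const assms(1)]])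
      (simp add: H_def Q_def inner_block inner_vcat inner_mult_right lower_rows_mult brow2_eq_lower_rows
        inner_add_left)
  show "((\<lambda>z. cost A B1 B2 C D C0 D0 a b z) has_derivative (\<lambda>Z. (2 *\<^sub>R (transpose B2 ** blk12 H
      + transpose D0 ** clC C0 D0 c ** bcol2 P)) \<bullet> Z)) (at c)"
    by (rule has_derivative_eq_rhs[OF has_derivative_cost[OF has_derivative_const has_derivative_const
          has_derivative_ident assms(1)]])
      (simp add: H_def P_def inner_block inner_hcat inner_mult_left right_cols_mult bcol2_eq_right_cols
        inner_add_left matrix_mul_assoc)
qed

end
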